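(* Let $n,d,e,f$ be positive integers with $d\mid n$ and $\gcd(e,n/d)=1$. Then $I_{n,de}=I_{n,d}$ and $I_{n,f}=I_{n,\gcd(n,f)}$. Moreover $$I_{n,d}=\sum_{k=0}^{\lfloor d/2\rfloor}\frac{d!\,(n/d)^k\,\bigl(2-(n/d \bmod 2)\bigr)^{d-2k}}{2^k k!\,(d-2k)!},$$ and in particular $I_n=\sum_{k=0}^{\lfloor n/2\rfloor}\frac{n!}{2^k k!(n-2k)!}$.
   Context: For positive integers $n,d$ and an $n$-cycle $\zeta\in S_n$, $I_{n,d}$ is the number of $\tau\in S_n$ with $\tau^2=1$ and $\tau\zeta^d=\zeta^d\tau$ (independent of the choice of $\zeta$), and $I_n:=I_{n,n}$. Here $n\bmod 2\in\{0,1\}$ is the remainder of $n$ upon division by $2$. *)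

theory Defs
  imports Complex_Main "HOL-Combinatorics.Permutations"
begin

definition std_cycle :: "nat \<Rightarrow> nat \<Rightarrow> nat" where
  "std_cycle n = (\<lambda>i. if i < n then Suc i mod n else i)"

definition I_nd :: "nat \<Rightarrow> nat \<Rightarrow> nat" where
  "I_nd n d = card {\<tau>. \<tau> permutes {..<n} \<and> \<tau> \<circ> \<tau> = id \<and>
                        \<tau> \<circ> (std_cycle n ^^ d) = (std_cycle n ^^ d) \<circ> \<tau>}"

definition I_n :: "nat \<Rightarrow> nat" where
  "I_n n = I_nd n n"

end

(*
  Write m = n div d and i = r + d j with r < d, j < m; then zeta^d maps r + d j to r + d (j + 1 mod m).
  A permutation commuting with zeta^d is therefore determined by the images of 0, ..., d - 1: writing
  tau r = p r + d s r, it sends r + d j to p r + d (s r + j mod m), and it is an involution iff p is an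
  involution of {0..<d} and s (p r) + s r = 0 (mod m). Counting these pairs (p, s) according to whether
  p fixes a given point or swaps it with one of the other d - 1 points gives the recurrence
  T (d + 2) = c T (d + 1) + (d + 1) m T d, with c = #{t mod m. 2 t = 0} = 2 - (m mod 2), and the stated
  sum solves it. The invariance statements hold because zeta^(d e) and zeta^d, resp. zeta^f and
  zeta^(gcd n f), are powers of each other, so they have the same centraliser.
*)
theory Submission
  imports Defs
begin

section \<open>Powers of the standard cycle and their centralisers\<close>

lemma comp_funpow_commute:
  assumes "f \<circ> g = g \<circ> f"
  shows "f \<circ> g ^^ k = g ^^ k \<circ> f"
proof (induction k)
  case (Suc k)
  then show ?case
    by (metis assms comp_assoc funpow.simps(2))
qed simp

lemma std_cycle_funpow:
  assumes "n > 0"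
  shows "std_cycle n ^^ j = (\<lambda>i. if i < n then (i + j) mod n else i)"
  using assms by (induction j) (auto simp: fun_eq_iff std_cycle_def mod_Suc_eq)

lemma std_cycle_funpow_outside: "\<not> i < n \<Longrightarrow> (std_cycle n ^^ j) i = i"
  by (induction j) (simp_all add: std_cycle_def)

lemma std_cycle_funpow_mod_eq:
  assumes "n > 0" "a mod n = b mod n"
  shows "std_cycle n ^^ a = std_cycle n ^^ b"
  using assms by (simp add: std_cycle_funpow fun_eq_iff) (metis mod_add_right_eq)

definition commuting_involutions :: "nat \<Rightarrow> (nat \<Rightarrow> nat) \<Rightarrow> (nat \<Rightarrow> nat) set" where
  "commuting_involutions n g = {\<tau>. \<tau> permutes {..<n} \<and> \<tau> \<circ> \<tau> = id \<and> \<tau> \<circ> g = g \<circ> \<tau>}"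

lemma I_nd_eq_card_commuting_involutions:
  "I_nd n d = card (commuting_involutions n (std_cycle n ^^ d))"
  by (simp add: I_nd_def commuting_involutions_def)

lemma commuting_involutions_subset_funpow:
  "commuting_involutions n g \<subseteq> commuting_involutions n (g ^^ k)"
  by (auto simp: commuting_involutions_def comp_funpow_commute)

lemma I_nd_eq_if_mutual_multiples:
  assumes "n > 0" "a * k mod n = b mod n" "b * l mod n = a mod n"
  shows "I_nd n a = I_nd n b"
proof -
  have "std_cycle n ^^ b = (std_cycle n ^^ a) ^^ k" "std_cycle n ^^ a = (std_cycle n ^^ b) ^^ l"
    unfolding funpow_mult using assms by (metis std_cycle_funpow_mod_eq)+
  then have "commuting_involutions n (std_cycle n ^^ a) = commuting_involutions n (std_cycle n ^^ b)"
    by (metis commuting_involutions_subset_funpow subset_antisym)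
  then show ?thesis
    by (simp add: I_nd_eq_card_commuting_involutions)
qed

lemma I_nd_gcd:
  assumes "n > 0" "f > 0"
  shows "I_nd n f = I_nd n (gcd n f)"
proof -
  obtain x y where "f * x = n * y + gcd f n"
    using bezout_nat[of f n] assms by auto
  then have "f * x mod n = gcd n f mod n"
    by (simp add: gcd.commute)
  moreover have "gcd n f * (f div gcd n f) mod n = f mod n"
    by simp
  ultimately show ?thesis
    using I_nd_eq_if_mutual_multiples \<open>n > 0\<close> by blast
qed

lemma I_nd_mult_coprime:
  assumes "n > 0" "e > 0" "d dvd n" "coprime e (n div d)"
  shows "I_nd n (d * e) = I_nd n d"
proof -
  obtain l y where "e * l = (n div d) * y + 1"
    using bezout_nat[of e "n div d"] assms by auto
  then have "d * e * l = n * y + d"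
    using \<open>d dvd n\<close> by (simp add: algebra_simps)
  then have "d * e * l mod n = d mod n"
    by simp
  then show ?thesis
    using I_nd_eq_if_mutual_multiples[of n d e "d * e"] \<open>n > 0\<close> by simp
qed

section \<open>Counting twisted involutions\<close>

definition twisted_involutions :: "nat \<Rightarrow> 'a set \<Rightarrow> (('a \<Rightarrow> 'a) \<times> ('a \<Rightarrow> nat)) set" where
  "twisted_involutions m A = {(p, s). p \<in> A \<rightarrow>\<^sub>E A \<and> s \<in> A \<rightarrow>\<^sub>E {..<m} \<and>
     (\<forall>r\<in>A. p (p r) = r \<and> (s (p r) + s r) mod m = 0)}"

definition two_torsion :: "nat \<Rightarrow> nat set" where
  "two_torsion m = {t. t < m \<and> (t + t) mod m = 0}"

lemma add_mod_eq_0_cases: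
  fixes a b m :: nat
  assumes "a < m" "b < m" "(a + b) mod m = 0"
  shows "a + b = 0 \<or> a + b = m"
proof -
  obtain q where q: "a + b = m * q"
    using assms(3) by blast
  with assms(1,2) have "q < 2"
    by (metis add_less_mono mult_2_right mult_less_cancel1)
  then show ?thesis
    using q by (auto simp: less_2_cases_iff)
qed

lemma two_torsion_iff:
  assumes "m > 0"
  shows "t \<in> two_torsion m \<longleftrightarrow> t = 0 \<or> t + t = m"
  using assms add_mod_eq_0_cases[of t m t] by (auto simp: two_torsion_def)

lemma card_two_torsion:
  assumes "m > 0"
  shows "card (two_torsion m) = 2 - m mod 2"
proof (cases "even m")
  case True
  then have "two_torsion m = {0, m div 2}" "m div 2 \<noteq> 0"
    using assms by (auto simp: two_torsion_iff)
  then show ?thesis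
    using True by simp
next
  case False
  then have "two_torsion m = {0}"
    using assms by (auto simp: two_torsion_iff)
  then show ?thesis
    using False by (simp add: odd_iff_mod_2_eq_one)
qed

lemma twisted_involutions_partner:
  assumes "(p, s) \<in> twisted_involutions m A" "a \<in> A"
  shows "p (p a) = a" "s (p a) = (m - s a) mod m"
proof -
  have "p a \<in> A" "s a < m" "s (p a) < m" "(s (p a) + s a) mod m = 0" "p (p a) = a"
    using assms by (auto simp: twisted_involutions_def)
  then show "p (p a) = a" "s (p a) = (m - s a) mod m"
    using add_mod_eq_0_cases[of "s (p a)" m "s a"] by auto
qed

lemma twisted_involutions_fixing_bij:
  assumes "a \<in> A"
  shows "bij_betw (\<lambda>(p, s). ((restrict p (A - {a}), restrict s (A - {a})), s a))
     {x \<in> twisted_involutions m A. fst x a = a} (twisted_involutions m (A - {a}) \<times> two_torsion m)"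
proof -
  have restrict_in: "((restrict p (A - {a}), restrict s (A - {a})), s a)
      \<in> twisted_involutions m (A - {a}) \<times> two_torsion m"
    if ps: "(p, s) \<in> twisted_involutions m A" "p a = a" for p s
  proof -
    have "p r \<in> A - {a}" if "r \<in> A - {a}" for r
      using that ps by (auto simp: twisted_involutions_def PiE_iff)
    then show ?thesis
      using ps assms by (auto simp: twisted_involutions_def two_torsion_def PiE_iff)
  qed
  show ?thesis
    apply (rule bij_betw_byWitness[where f' = "\<lambda>((p, s), t). (p(a := a), s(a := t))"])
    subgoal using assms by (auto simp: twisted_involutions_def fun_eq_iff PiE_iff extensional_def)
    subgoal using assms by (auto simp: twisted_involutions_def fun_eq_iff PiE_iff extensional_def)
    subgoal using restrict_in by auto
    subgoal using assms by (auto simp: twisted_involutions_def two_torsion_def PiE_iff extensional_def)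
    done
qed

lemma twisted_involutions_swapping_bij:
  assumes "a \<in> A" "b \<in> A" "b \<noteq> a"
  shows "bij_betw (\<lambda>(p, s). ((restrict p (A - {a, b}), restrict s (A - {a, b})), s a))
     {x \<in> twisted_involutions m A. fst x a = b} (twisted_involutions m (A - {a, b}) \<times> {..<m})"
proof -
  let ?B = "A - {a, b}"
  have partner: "p b = a" "s b = (m - s a) mod m"
    if "(p, s) \<in> twisted_involutions m A" "p a = b" for p s
    using twisted_involutions_partner[OF that(1) \<open>a \<in> A\<close>] that(2) by simp_all
  have restrict_in: "((restrict p ?B, restrict s ?B), s a) \<in> twisted_involutions m ?B \<times> {..<m}"
    if ps: "(p, s) \<in> twisted_involutions m A" "p a = b" for p s
  proof -
    have "p r \<in> ?B" if "r \<in> ?B" for r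
      using that ps partner[OF ps] by (auto simp: twisted_involutions_def PiE_iff)
    then show ?thesis
      using ps \<open>a \<in> A\<close> by (auto simp: twisted_involutions_def PiE_iff)
  qed
  have extend_in: "(p(a := b, b := a), s(a := t, b := (m - t) mod m))
      \<in> {x \<in> twisted_involutions m A. fst x a = b}"
    if "(p, s) \<in> twisted_involutions m ?B" "t < m" for p s t
    using that assms
    by (auto simp: twisted_involutions_def PiE_iff extensional_def mod_add_left_eq mod_add_right_eq)
  have undo: "(restrict p ?B)(a := b, b := a) = p" "(restrict s ?B)(a := s a, b := (m - s a) mod m) = s"
    if ps: "(p, s) \<in> twisted_involutions m A" "p a = b" for p s
    using ps partner[OF ps] by (auto simp: twisted_involutions_def fun_eq_iff PiE_iff extensional_def)
  show ?thesis
    apply (rule bij_betw_byWitness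
        [where f' = "\<lambda>((p, s), t). (p(a := b, b := a), s(a := t, b := (m - t) mod m))"])
    subgoal using undo by auto
    subgoal using assms by (auto simp: twisted_involutions_def fun_eq_iff PiE_iff extensional_def)
    subgoal using restrict_in by auto
    subgoal using extend_in by auto
    done
qed

lemma finite_twisted_involutions: "finite A \<Longrightarrow> finite (twisted_involutions m A)"
  by (rule finite_subset[of _ "(A \<rightarrow>\<^sub>E A) \<times> (A \<rightarrow>\<^sub>E {..<m})"])
     (auto simp: twisted_involutions_def intro!: finite_PiE)

lemma card_twisted_involutions_remove:
  assumes "finite A" "a \<in> A"
  shows "card (twisted_involutions m A) = card (two_torsion m) * card (twisted_involutions m (A - {a}))
    + (\<Sum>b\<in>A - {a}. card (twisted_involutions m (A - {a, b})) * m)"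
proof -
  let ?H = "twisted_involutions m A"
  have fin: "finite ?H"
    using assms(1) by (rule finite_twisted_involutions)
  have split: "?H = {x\<in>?H. fst x a = a} \<union> (\<Union>b\<in>A - {a}. {x\<in>?H. fst x a = b})"
    using assms(2) by (auto simp: twisted_involutions_def PiE_iff)
  have "card ?H = card {x\<in>?H. fst x a = a} + card (\<Union>b\<in>A - {a}. {x\<in>?H. fst x a = b})"
    by (subst split, rule card_Un_disjoint) (use fin in \<open>auto intro: finite_subset[OF _ fin]\<close>)
  also have "card (\<Union>b\<in>A - {a}. {x\<in>?H. fst x a = b})
      = (\<Sum>b\<in>A - {a}. card {x\<in>?H. fst x a = b})"
    by (rule card_UN_disjoint) (use fin assms(1) in auto)
  also have "card {x\<in>?H. fst x a = a} = card (twisted_involutions m (A - {a}) \<times> two_torsion m)"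
    using twisted_involutions_fixing_bij[OF assms(2)] by (rule bij_betw_same_card)
  also have "(\<Sum>b\<in>A - {a}. card {x\<in>?H. fst x a = b})
      = (\<Sum>b\<in>A - {a}. card (twisted_involutions m (A - {a, b}) \<times> {..<m}))"
  proof (rule sum.cong)
    fix b
    assume "b \<in> A - {a}"
    then show "card {x\<in>?H. fst x a = b} = card (twisted_involutions m (A - {a, b}) \<times> {..<m})"
      using assms(2) by (intro bij_betw_same_card[OF twisted_involutions_swapping_bij]) auto
  qed simp
  finally show ?thesis
    by (simp add: card_cartesian_product mult.commute)
qed

fun twisted_count :: "nat \<Rightarrow> nat \<Rightarrow> nat \<Rightarrow> nat" where
  "twisted_count c m 0 = 1"
| "twisted_count c m (Suc 0) = c"
| "twisted_count c m (Suc (Suc k)) = c * twisted_count c m (Suc k) + Suc k * m * twisted_count c m k"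

lemma twisted_count_Suc:
  "twisted_count c m (Suc k) = c * twisted_count c m k + k * m * twisted_count c m (k - 1)"
  by (cases k) auto

lemma card_twisted_involutions:
  assumes "finite A"
  shows "card (twisted_involutions m A) = twisted_count (card (two_torsion m)) m (card A)"
  using assms
proof (induction "card A" arbitrary: A rule: less_induct)
  case less
  let ?T = "twisted_count (card (two_torsion m)) m"
  show ?case
  proof (cases "card A")
    case 0
    then show ?thesis
      using less.prems by (simp add: twisted_involutions_def)
  next
    case (Suc k)
    then obtain a where a: "a \<in> A"
      by (metis card.empty ex_in_conv nat.distinct(1))
    have card_remove: "card (A - {a}) = k"
      using Suc a less.prems by simp
    have "card (twisted_involutions m (A - {a, b})) = ?T (k - 1)" if "b \<in> A - {a}" for b
    proof -
      have "card (A - {a, b}) = k - 1"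
        using card_remove that less.prems by (metis Diff_insert2 card_Diff_singleton)
      then show ?thesis
        using less.hyps less.prems Suc by simp
    qed
    then have "card (twisted_involutions m A) = card (two_torsion m) * ?T k + k * (?T (k - 1) * m)"
      using card_twisted_involutions_remove[OF less.prems a] less.hyps less.prems card_remove Suc
      by simp
    then show ?thesis
      using Suc by (simp add: twisted_count_Suc mult_ac)
  qed
qed

section \<open>Solving the recurrence\<close>

text \<open>The terms of the closed form, extended by zero beyond \<open>d div 2\<close> so that the recurrence can be
  checked termwise.\<close>
definition twisted_term :: "real \<Rightarrow> real \<Rightarrow> nat \<Rightarrow> nat \<Rightarrow> real" where
  "twisted_term x y d k = (if 2 * k \<le> d then fact d * x ^ k * y ^ (d - 2 * k)
      / (2 ^ k * fact k * fact (d - 2 * k)) else 0)"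

lemma twisted_term_Suc_0: "twisted_term x y (Suc d) 0 = y * twisted_term x y d 0"
  by (simp add: twisted_term_def field_simps del: fact_Suc)

lemma twisted_term_Suc_Suc:
  "twisted_term x y (Suc (Suc d)) (Suc k)
    = y * twisted_term x y (Suc d) (Suc k) + real (Suc d) * x * twisted_term x y d k"
proof (cases "2 * k < d")
  case True
  then obtain j where d: "d = Suc (2 * k + j)"
    using less_imp_Suc_add by blast
  define C where "C = fact d * x ^ Suc k * y ^ Suc j / (2 ^ Suc k * fact (Suc k) * fact (Suc j))"
  have term_Suc_Suc: "twisted_term x y (Suc (Suc d)) (Suc k) = real (Suc (Suc d)) * real (Suc d) * C"
    and term_Suc: "y * twisted_term x y (Suc d) (Suc k) = real (Suc d) * real (Suc j) * C"
    and term_same: "x * twisted_term x y d k = 2 * real (Suc k) * C"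
    unfolding twisted_term_def C_def by (simp_all add: d field_simps del: of_nat_Suc)
  have "real (Suc (Suc d)) * real (Suc d) * C
      = real (Suc d) * real (Suc j) * C + real (Suc d) * (2 * real (Suc k) * C)"
    using d by (simp add: algebra_simps)
  then show ?thesis
    by (simp only: term_Suc_Suc term_Suc term_same mult.assoc)
next
  case False
  show ?thesis
  proof (cases "d = 2 * k")
    case True
    then show ?thesis
      by (simp add: twisted_term_def field_simps del: of_nat_Suc) simp
  next
    case False
    with \<open>\<not> 2 * k < d\<close> show ?thesis
      by (simp add: twisted_term_def)
  qed
qed

lemma twisted_term_eq_0: "d < 2 * k \<Longrightarrow> twisted_term x y d k = 0"
  by (simp add: twisted_term_def)

lemma sum_twisted_term:
  "(\<Sum>k = 0..d. twisted_term (real m) (real c) d k) = real (twisted_count c m d)"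
proof (induction c m d rule: twisted_count.induct)
  case (3 c m d)
  let ?u = "twisted_term (real m) (real c)"
  have "(\<Sum>k = 0..Suc (Suc d). ?u (Suc (Suc d)) k)
      = ?u (Suc (Suc d)) 0 + (\<Sum>k = 0..Suc d. ?u (Suc (Suc d)) (Suc k))"
    by (simp only: sum.atLeast0_atMost_Suc_shift[of _ "Suc d"] o_def)
  also have "\<dots> = real c * ?u (Suc d) 0
      + (\<Sum>k = 0..Suc d. real c * ?u (Suc d) (Suc k) + real (Suc d) * real m * ?u d k)"
    by (simp only: twisted_term_Suc_0 twisted_term_Suc_Suc)
  also have "\<dots> = real c * (?u (Suc d) 0 + (\<Sum>k = 0..Suc d. ?u (Suc d) (Suc k)))
      + real (Suc d) * real m * (\<Sum>k = 0..Suc d. ?u d k)"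
    by (simp only: sum.distrib sum_distrib_left distrib_left add.assoc)
  also have "?u (Suc d) 0 + (\<Sum>k = 0..Suc d. ?u (Suc d) (Suc k)) = (\<Sum>k = 0..Suc (Suc d). ?u (Suc d) k)"
    by (simp only: sum.atLeast0_atMost_Suc_shift[of _ "Suc d"] o_def)
  also have "\<dots> = (\<Sum>k = 0..Suc d. ?u (Suc d) k)"
    by (simp add: twisted_term_eq_0)
  also have "(\<Sum>k = 0..Suc d. ?u d k) = (\<Sum>k = 0..d. ?u d k)"
    by (simp add: twisted_term_eq_0)
  finally show ?case
    unfolding "3.IH" by (simp add: distrib_right)
qed (simp_all add: twisted_term_def)

lemma twisted_count_closed_form:
  "real (twisted_count c m d) = (\<Sum>k = 0..d div 2. fact d * real m ^ k * real c ^ (d - 2 * k)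
     / (2 ^ k * fact k * fact (d - 2 * k)))"
proof -
  have "real (twisted_count c m d) = (\<Sum>k = 0..d div 2. twisted_term (real m) (real c) d k)"
    unfolding sum_twisted_term[symmetric]
    by (intro sum.mono_neutral_right) (auto simp: twisted_term_eq_0)
  also have "\<dots> = (\<Sum>k = 0..d div 2. fact d * real m ^ k * real c ^ (d - 2 * k)
     / (2 ^ k * fact k * fact (d - 2 * k)))"
    by (intro sum.cong) (auto simp: twisted_term_def)
  finally show ?thesis .
qed

section \<open>Involutions commuting with a power of the cycle\<close>

lemma mod_mult_add_split:
  fixes x d m j :: nat
  assumes "d > 0"
  shows "(x + d * j) mod (d * m) = x mod d + d * ((x div d + j) mod m)"
  using assms by (simp add: mod_mult2_eq ac_simps)

lemma std_cycle_funpow_funpow: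
  assumes "d * m > 0"
  shows "(std_cycle (d * m) ^^ d) ^^ j = (\<lambda>x. if x < d * m then (x + d * j) mod (d * m) else x)"
  by (simp only: funpow_mult) (simp add: std_cycle_funpow[OF assms] mult.commute)

lemma commuting_permutation_eq:
  assumes "d > 0" "\<tau> permutes {..<d * m}"
    and "\<tau> \<circ> std_cycle (d * m) ^^ d = std_cycle (d * m) ^^ d \<circ> \<tau>" and "i < d * m"
  shows "\<tau> i = \<tau> (i mod d) mod d + d * ((\<tau> (i mod d) div d + i div d) mod m)"
proof -
  let ?\<sigma> = "(std_cycle (d * m) ^^ d) ^^ (i div d)"
  have pos: "d * m > 0"
    using assms(4) by linarith
  have "i mod d < d * m"
    using assms(4) by (metis le_less_trans mod_less_eq_dividend)
  then have in_range: "i mod d < d * m" "\<tau> (i mod d) < d * m"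
    using permutes_in_image[OF assms(2)] by auto
  have "\<tau> i = \<tau> (?\<sigma> (i mod d))"
    using in_range pos assms(4) by (simp add: std_cycle_funpow_funpow)
  also have "\<dots> = ?\<sigma> (\<tau> (i mod d))"
    using comp_funpow_commute[OF assms(3)] by (metis comp_apply)
  also have "\<dots> = (\<tau> (i mod d) + d * (i div d)) mod (d * m)"
    using in_range pos by (simp add: std_cycle_funpow_funpow)
  finally show ?thesis
    using assms(1) by (simp add: mod_mult_add_split)
qed

definition residue_shift :: "nat \<Rightarrow> (nat \<Rightarrow> nat) \<Rightarrow> (nat \<Rightarrow> nat) \<times> (nat \<Rightarrow> nat)" where
  "residue_shift d \<tau> = (restrict (\<lambda>r. \<tau> r mod d) {..<d}, restrict (\<lambda>r. \<tau> r div d) {..<d})"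

definition of_residue_shift :: "nat \<Rightarrow> nat \<Rightarrow> (nat \<Rightarrow> nat) \<times> (nat \<Rightarrow> nat) \<Rightarrow> nat \<Rightarrow> nat" where
  "of_residue_shift d m ps = (\<lambda>i. if i < d * m
     then fst ps (i mod d) + d * ((snd ps (i mod d) + i div d) mod m) else i)"

lemma of_residue_shift_residue_shift:
  assumes "d > 0" "\<tau> \<in> commuting_involutions (d * m) (std_cycle (d * m) ^^ d)"
  shows "of_residue_shift d m (residue_shift d \<tau>) = \<tau>"
proof
  fix i
  have perm: "\<tau> permutes {..<d * m}"
    and comm: "\<tau> \<circ> std_cycle (d * m) ^^ d = std_cycle (d * m) ^^ d \<circ> \<tau>"
    using assms(2) by (simp_all add: commuting_involutions_def)
  show "of_residue_shift d m (residue_shift d \<tau>) i = \<tau> i"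
  proof (cases "i < d * m")
    case True
    then have "\<tau> i = \<tau> (i mod d) mod d + d * ((\<tau> (i mod d) div d + i div d) mod m)"
      by (rule commuting_permutation_eq[OF assms(1) perm comm])
    then show ?thesis
      using True assms(1) by (simp add: of_residue_shift_def residue_shift_def)
  next
    case False
    then show ?thesis
      using perm by (simp add: of_residue_shift_def permutes_not_in)
  qed
qed

lemma commuting_involution_residue_shift_inverse:
  assumes "d > 0" "m > 0" "\<tau> \<in> commuting_involutions (d * m) (std_cycle (d * m) ^^ d)" "r < d"
  shows "\<tau> (\<tau> r mod d) mod d = r" "(\<tau> (\<tau> r mod d) div d + \<tau> r div d) mod m = 0"
proof -
  define a where "a = \<tau> (\<tau> r mod d) mod d"
  define b where "b = (\<tau> (\<tau> r mod d) div d + \<tau> r div d) mod m"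
  have perm: "\<tau> permutes {..<d * m}" and inv: "\<tau> \<circ> \<tau> = id"
    and comm: "\<tau> \<circ> std_cycle (d * m) ^^ d = std_cycle (d * m) ^^ d \<circ> \<tau>"
    using assms(3) by (simp_all add: commuting_involutions_def)
  have "r < d * m"
    by (rule less_le_trans[OF assms(4)]) (use assms(2) in simp)
  then have "\<tau> r < d * m"
    using permutes_in_image[OF perm] by simp
  have "r = \<tau> (\<tau> r)"
    using inv by (metis comp_apply id_apply)
  also have "\<dots> = a + d * b"
    unfolding a_def b_def by (rule commuting_permutation_eq[OF assms(1) perm comm \<open>\<tau> r < d * m\<close>])
  finally have r: "r = a + d * b" .
  have "a < d"
    using assms(1) by (simp add: a_def)
  then have "b = r div d"
    using r by simp
  also have "\<dots> = 0"
    using assms(4) by simp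
  finally have "b = 0" .
  with r have "a = r" "b = 0"
    by simp_all
  then show "\<tau> (\<tau> r mod d) mod d = r" "(\<tau> (\<tau> r mod d) div d + \<tau> r div d) mod m = 0"
    unfolding a_def b_def .
qed

lemma residue_shift_in_twisted_involutions:
  assumes "d > 0" "m > 0" "\<tau> \<in> commuting_involutions (d * m) (std_cycle (d * m) ^^ d)"
  shows "residue_shift d \<tau> \<in> twisted_involutions m {..<d}"
proof -
  have "\<tau> r div d < m" if "r < d" for r
  proof -
    have "r < d * m"
      by (rule less_le_trans[OF that]) (use assms(2) in simp)
    then have "\<tau> r < d * m"
      using assms(3) permutes_in_image by (fastforce simp: commuting_involutions_def)
    then show ?thesis
      by (simp add: less_mult_imp_div_less mult.commute)
  qed
  then show ?thesis
    using assms(1) commuting_involution_residue_shift_inverse[OF assms]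
    by (auto simp: twisted_involutions_def residue_shift_def)
qed

lemma add_mult_less_mult:
  fixes x y d m :: nat
  assumes "x < d" "y < m"
  shows "x + d * y < d * m"
proof -
  have "x + d * y < d * Suc y"
    using assms(1) by simp
  also have "\<dots> \<le> d * m"
    using assms(2) by (intro mult_le_mono2) simp
  finally show ?thesis .
qed

lemma of_residue_shift_coordinates:
  assumes "d > 0" "(p, s) \<in> twisted_involutions m {..<d}" "i < d * m"
  shows "of_residue_shift d m (p, s) i < d * m"
    and "of_residue_shift d m (p, s) i mod d = p (i mod d)"
    and "of_residue_shift d m (p, s) i div d = (s (i mod d) + i div d) mod m"
proof -
  have "m > 0"
    using assms(3) by (cases m) auto
  have "p (i mod d) < d"
    using assms(1,2) by (auto simp: twisted_involutions_def PiE_iff)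
  moreover have "of_residue_shift d m (p, s) i = p (i mod d) + d * ((s (i mod d) + i div d) mod m)"
    using assms(3) by (simp add: of_residue_shift_def)
  ultimately show "of_residue_shift d m (p, s) i < d * m"
    and "of_residue_shift d m (p, s) i mod d = p (i mod d)"
    and "of_residue_shift d m (p, s) i div d = (s (i mod d) + i div d) mod m"
    using \<open>m > 0\<close> by (simp_all add: add_mult_less_mult)
qed

lemma of_residue_shift_involution:
  assumes "d > 0" "(p, s) \<in> twisted_involutions m {..<d}"
  shows "of_residue_shift d m (p, s) (of_residue_shift d m (p, s) i) = i"
proof (cases "i < d * m")
  case True
  let ?r = "i mod d" and ?j = "i div d"
  have inv: "p (p ?r) = ?r" "(s (p ?r) + s ?r) mod m = 0"
    using assms by (auto simp: twisted_involutions_def)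
  have "?j < m"
    using True by (simp add: less_mult_imp_div_less mult.commute)
  have "of_residue_shift d m (p, s) (of_residue_shift d m (p, s) i)
      = p (p ?r) + d * ((s (p ?r) + (s ?r + ?j) mod m) mod m)"
    using of_residue_shift_coordinates[OF assms True]
    by (simp add: of_residue_shift_def)
  also have "(s (p ?r) + (s ?r + ?j) mod m) mod m = ((s (p ?r) + s ?r) mod m + ?j) mod m"
    by (simp add: mod_simps add.assoc)
  finally show ?thesis
    using inv \<open>?j < m\<close> by simp
next
  case False
  then show ?thesis
    by (simp add: of_residue_shift_def)
qed

lemma of_residue_shift_commute:
  assumes "d > 0" "(p, s) \<in> twisted_involutions m {..<d}"
  shows "of_residue_shift d m (p, s) \<circ> std_cycle (d * m) ^^ d
    = std_cycle (d * m) ^^ d \<circ> of_residue_shift d m (p, s)"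
proof
  fix i
  let ?\<psi> = "of_residue_shift d m (p, s)"
  show "(?\<psi> \<circ> std_cycle (d * m) ^^ d) i = (std_cycle (d * m) ^^ d \<circ> ?\<psi>) i"
  proof (cases "i < d * m")
    case True
    let ?r = "i mod d" and ?j = "i div d"
    have pos: "d * m > 0"
      using True by linarith
    have \<sigma>: "(std_cycle (d * m) ^^ d) x = x mod d + d * ((x div d + 1) mod m)" if "x < d * m" for x
      using that std_cycle_funpow[OF pos, of d] mod_mult_add_split[OF assms(1), of x 1 m] by simp
    have shifted: "(std_cycle (d * m) ^^ d) i mod d = ?r" "(std_cycle (d * m) ^^ d) i div d = (?j + 1) mod m"
      "(std_cycle (d * m) ^^ d) i < d * m"
      using assms(1) pos \<sigma>[OF True] by (simp_all add: add_mult_less_mult)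
    have "(?\<psi> \<circ> std_cycle (d * m) ^^ d) i = p ?r + d * ((s ?r + (?j + 1) mod m) mod m)"
      using shifted by (simp add: of_residue_shift_def)
    also have "\<dots> = p ?r + d * (((s ?r + ?j) mod m + 1) mod m)"
      by (simp add: mod_simps add.assoc)
    also have "\<dots> = (std_cycle (d * m) ^^ d \<circ> ?\<psi>) i"
      using of_residue_shift_coordinates[OF assms True] \<sigma> by simp
    finally show ?thesis .
  next
    case False
    then show ?thesis
      by (simp add: of_residue_shift_def std_cycle_funpow_outside)
  qed
qed

lemma of_residue_shift_in_commuting_involutions:
  assumes "d > 0" "(p, s) \<in> twisted_involutions m {..<d}"
  shows "of_residue_shift d m (p, s) \<in> commuting_involutions (d * m) (std_cycle (d * m) ^^ d)"
proof -
  let ?\<psi> = "of_residue_shift d m (p, s)"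
  have inv: "?\<psi> (?\<psi> i) = i" for i
    using of_residue_shift_involution[OF assms] .
  have "?\<psi> permutes {..<d * m}"
  proof (rule bij_imp_permutes)
    show "bij_betw ?\<psi> {..<d * m} {..<d * m}"
      by (rule bij_betw_byWitness[where f' = ?\<psi>])
        (use inv of_residue_shift_coordinates(1)[OF assms] in auto)
    show "?\<psi> i = i" if "i \<notin> {..<d * m}" for i
      using that by (simp add: of_residue_shift_def)
  qed
  moreover have "?\<psi> \<circ> ?\<psi> = id"
    using inv by (simp add: fun_eq_iff)
  ultimately show ?thesis
    using of_residue_shift_commute[OF assms] by (simp add: commuting_involutions_def)
qed

lemma residue_shift_of_residue_shift:
  assumes "d > 0" "m > 0" "(p, s) \<in> twisted_involutions m {..<d}"
  shows "residue_shift d (of_residue_shift d m (p, s)) = (p, s)"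
proof -
  have "of_residue_shift d m (p, s) r mod d = p r" "of_residue_shift d m (p, s) r div d = s r"
    if "r < d" for r
  proof -
    have "r < d * m"
      by (rule less_le_trans[OF that]) (use assms(2) in simp)
    moreover have "s r < m"
      using assms(3) that by (auto simp: twisted_involutions_def)
    ultimately show "of_residue_shift d m (p, s) r mod d = p r" "of_residue_shift d m (p, s) r div d = s r"
      using of_residue_shift_coordinates(2,3)[OF assms(1,3)] that by simp_all
  qed
  moreover have "p \<in> extensional {..<d}" "s \<in> extensional {..<d}"
    using assms(3) by (auto simp: twisted_involutions_def PiE_iff)
  ultimately show ?thesis
    by (auto simp: residue_shift_def fun_eq_iff extensional_def)
qed

lemma residue_shift_bij:
  assumes "d > 0" "m > 0"
  shows "bij_betw (residue_shift d) (commuting_involutions (d * m) (std_cycle (d * m) ^^ d))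
    (twisted_involutions m {..<d})"
  by (rule bij_betw_byWitness[where f' = "of_residue_shift d m"])
    (use assms of_residue_shift_residue_shift residue_shift_of_residue_shift
      residue_shift_in_twisted_involutions of_residue_shift_in_commuting_involutions in force)+

lemma I_nd_eq_card_twisted_involutions:
  assumes "n > 0" "d > 0" "d dvd n"
  shows "I_nd n d = card (twisted_involutions (n div d) {..<d})"
proof -
  have n: "n = d * (n div d)" and "n div d > 0"
    using assms by (auto elim!: dvdE)
  then show ?thesis
    using bij_betw_same_card[OF residue_shift_bij[OF assms(2) \<open>n div d > 0\<close>]]
    by (simp add: I_nd_eq_card_commuting_involutions flip: n)
qed

lemma I_nd_closed_form:
  assumes "n > 0" "d > 0" "d dvd n"
  shows "real (I_nd n d) =
    (\<Sum>k = 0..d div 2. real (fact d) * real (n div d) ^ k * (2 - real (n div d mod 2)) ^ (d - 2 * k)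
      / (2 ^ k * real (fact k) * real (fact (d - 2 * k))))"
proof -
  have "n div d > 0"
    using assms by (auto elim!: dvdE)
  then have "I_nd n d = twisted_count (2 - n div d mod 2) (n div d) d"
    using assms by (simp add: I_nd_eq_card_twisted_involutions card_twisted_involutions card_two_torsion)
  moreover have "real (2 - n div d mod 2) = 2 - real (n div d mod 2)"
    by (simp add: of_nat_diff)
  ultimately show ?thesis
    by (simp add: twisted_count_closed_form)
qed

theorem lemma6p2:
  fixes n d e f :: nat
  assumes "n > 0" "d > 0" "e > 0" "f > 0"
    and "d dvd n" and "coprime e (n div d)"
  shows "I_nd n (d * e) = I_nd n d
    \<and> I_nd n f = I_nd n (gcd n f)
    \<and> real (I_nd n d) =
           (\<Sum>k = 0..d div 2. real (fact d) * real (n div d) ^ k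
              * (2 - real (n div d mod 2)) ^ (d - 2 * k)
              / (2 ^ k * real (fact k) * real (fact (d - 2 * k))))
    \<and> real (I_n n) =
           (\<Sum>k = 0..n div 2. real (fact n) / (2 ^ k * real (fact k) * real (fact (n - 2 * k))))"
proof (intro conjI I_nd_mult_coprime I_nd_gcd I_nd_closed_form)
  show "real (I_n n) =
    (\<Sum>k = 0..n div 2. real (fact n) / (2 ^ k * real (fact k) * real (fact (n - 2 * k))))"
    using I_nd_closed_form[of n n] \<open>n > 0\<close> by (simp add: I_n_def)
qed (use assms in simp_all)

end
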